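(* For every $n\ge 3$ there exist distributions $G_1,\dots,G_n$ satisfying the standing assumptions for which no ordinal SCF solves program (OPT); that is, for these distributions there is an anonymous BIC SCF $f$ with $W(f)>W(g)$ for every ordinal, anonymous, BIC SCF $g$.
   Context: There are $n\ge 2$ agents $N=\{1,\dots,n\}$ choosing between a Reform $R$ and the Status quo $S$. Agent $i$ gets utility $0$ if $S$ is chosen and utility $v_i\in\mathbb{R}$ if $R$ is chosen. Values are independent random variables $\tilde v_1,\dots,\tilde v_n$, $\tilde v_i\sim G_i$ (Borel probability distributions on $\mathbb{R}$, $G_i(0)=\Pr(\tilde v_i\le 0)$). Standing assumptions: all $\tilde v_i$ have the same support $V$ with $0\notin V$; $\mathbb{E}|\tilde v_i|<\infty$; $p_i:=1-G_i(0)\in(0,1)$. An SCF is a Borel measurable $f:V^n\to[0,1]$ (probability of choosing $R$). $f$ is anonymous if $f(v)=f(\pi v)$ for every $v\in V^n$ and every permutation $\pi$ of $N$, where $\pi v=(v_{\pi(1)},\dots,v_{\pi(n)})$. $f$ is BIC if for every $i$ and all $v_i,v_i'\in V$: $v_i\,\mathbb{E}(f(v_i,\tilde v_{-i}))\ge v_i\,\mathbb{E}(f(v_i',\tilde v_{-i}))$ (expectation over $\tilde v_{-i}=(\tilde v_j)_{j\neq i}$). Expected welfare is $W(f)=\mathbb{E}\big(f(\tilde v)\sum_{i=1}^n\tilde v_i\big)$. Program (OPT): maximize $W(f)$ subject to $f$ being anonymous and BIC. For $v\in V^n$ let $\chi(v)=\{i\in N: v_i>0\}$. $f$ is ordinal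 if $f(v)=f(v')$ whenever $\chi(v)=\chi(v')$. *)

theory Defs
  imports "HOL-Probability.Probability"
begin

text \<open>Agents are indexed by 0..<n; a profile is an (extensional) function nat => real,
  i.e. an element of PiE {..<n} (\<lambda>_. V).\<close>

definition support_of :: "real measure \<Rightarrow> real set" where
  "support_of M = {x. \<forall>e>0. measure M (ball x e) > 0}"

definition standing_assms :: "nat \<Rightarrow> (nat \<Rightarrow> real measure) \<Rightarrow> real set \<Rightarrow> bool" where
  "standing_assms n G V \<longleftrightarrow>
     (\<forall>i<n. prob_space (G i) \<and> sets (G i) = sets borel \<and>
            support_of (G i) = V \<and>
            integrable (G i) (\<lambda>x. x) \<and>
            0 < 1 - measure (G i) {..0} \<and> 1 - measure (G i) {..0} < 1) \<and>
     0 \<notin> V"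

definition SCF :: "nat \<Rightarrow> real set \<Rightarrow> ((nat \<Rightarrow> real) \<Rightarrow> real) \<Rightarrow> bool" where
  "SCF n V f \<longleftrightarrow>
     f \<in> borel_measurable (PiM {..<n} (\<lambda>_. borel)) \<and>
     (\<forall>v \<in> PiE {..<n} (\<lambda>_. V). 0 \<le> f v \<and> f v \<le> 1)"

definition anonymous :: "nat \<Rightarrow> real set \<Rightarrow> ((nat \<Rightarrow> real) \<Rightarrow> real) \<Rightarrow> bool" where
  "anonymous n V f \<longleftrightarrow>
     (\<forall>v \<in> PiE {..<n} (\<lambda>_. V). \<forall>\<pi>. \<pi> permutes {..<n} \<longrightarrow> f v = f (v \<circ> \<pi>))"

definition interim :: "nat \<Rightarrow> (nat \<Rightarrow> real measure) \<Rightarrow> ((nat \<Rightarrow> real) \<Rightarrow> real) \<Rightarrow> nat \<Rightarrow> real \<Rightarrow> real" where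
  "interim n G f i x = (\<integral>w. f (w(i := x)) \<partial>(PiM ({..<n} - {i}) G))"

definition BIC :: "nat \<Rightarrow> (nat \<Rightarrow> real measure) \<Rightarrow> real set \<Rightarrow> ((nat \<Rightarrow> real) \<Rightarrow> real) \<Rightarrow> bool" where
  "BIC n G V f \<longleftrightarrow>
     (\<forall>i<n. \<forall>x\<in>V. \<forall>x'\<in>V. x * interim n G f i x \<ge> x * interim n G f i x')"

definition welfare :: "nat \<Rightarrow> (nat \<Rightarrow> real measure) \<Rightarrow> ((nat \<Rightarrow> real) \<Rightarrow> real) \<Rightarrow> real" where
  "welfare n G f = (\<integral>v. f v * (\<Sum>i<n. v i) \<partial>(PiM {..<n} G))"

definition chi :: "nat \<Rightarrow> (nat \<Rightarrow> real) \<Rightarrow> nat set" where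
  "chi n v = {i. i < n \<and> v i > 0}"

definition ordinal :: "nat \<Rightarrow> real set \<Rightarrow> ((nat \<Rightarrow> real) \<Rightarrow> real) \<Rightarrow> bool" where
  "ordinal n V f \<longleftrightarrow>
     (\<forall>v \<in> PiE {..<n} (\<lambda>_. V). \<forall>v' \<in> PiE {..<n} (\<lambda>_. V). chi n v = chi n v' \<longrightarrow> f v = f v')"

end

theory Submission
  imports Defs
begin

text \<open>
  Take the common support V = {A, -1, -2} with A = 2n - 5/2, let agent 0 report A, -1, -2 with
  probabilities aH, bH, cH and every other agent with pL, rL, gL. An ordinal anonymous SCF g can
  only depend on the number c of positive reports. The SCF used here also looks at the number d
  of reports -1: it chooses R surely if c >= 2; if c = 1 with probability phi, 1, 0 according as
  d = 0, d = 1, d >= 2; if c = 0 with probability kappa when d = 0 and never otherwise. It is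
  monotone in c, and phi, kappa are chosen so that both negative types of every agent face the
  same interim probability, which makes it BIC.

  The value of a profile is (A + 2) c + d - 2n: nonnegative for c >= 2, d - 1/2 for c = 1 and
  nonpositive for c = 0. Comparing pointwise with g, which is some constant h on c = 1, the welfare
  advantage is at least E[f value; c <= 1] - h E[d - 1/2; c = 1]. Since the counts of the agents other
  than 0 are multinomial, both expectations are explicit rational functions of u = 1/(n - 1): the
  first is positive and the second nonpositive.
\<close>

section \<open>Finite products of finitely supported distributions\<close>

lemma support_of_distr_pmf:
  fixes p :: "real pmf"
  assumes "finite (set_pmf p)"
  shows "support_of (distr (measure_pmf p) borel (\<lambda>x. x)) = set_pmf p"
proof -
  have "x \<in> support_of (distr (measure_pmf p) borel (\<lambda>x. x)) \<longleftrightarrow> x \<in> set_pmf p" for x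
  proof
    assume x: "x \<in> support_of (distr (measure_pmf p) borel (\<lambda>x. x))"
    show "x \<in> set_pmf p"
    proof (rule ccontr)
      assume "x \<notin> set_pmf p"
      moreover have "open (- set_pmf p)"
        using assms by (simp add: finite_imp_closed open_Compl)
      ultimately obtain e where "e > 0" "ball x e \<subseteq> - set_pmf p"
        by (meson ComplI open_contains_ball)
      then have "measure_pmf.prob p (ball x e) = 0"
        by (auto simp: measure_pmf_zero_iff)
      moreover have "measure_pmf.prob p (ball x e) > 0"
        using x \<open>e > 0\<close> by (simp add: support_of_def measure_distr)
      ultimately show False by simp
    qed
  next
    assume "x \<in> set_pmf p"
    then have "measure_pmf.prob p (ball x e) > 0" if "e > 0" for e
      using that by (metis measure_pmf_posI centre_in_ball)
    then show "x \<in> support_of (distr (measure_pmf p) borel (\<lambda>x. x))"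
      by (simp add: support_of_def measure_distr)
  qed
  then show ?thesis by blast
qed

lemma integrable_distr_pmf:
  fixes p :: "real pmf"
  assumes "finite (set_pmf p)"
  shows "integrable (distr (measure_pmf p) borel (\<lambda>x. x)) (\<lambda>x. x)"
  using assms by (simp add: integrable_distr_eq integrable_measure_pmf_finite)

lemma sum_PiE_insert_prod:
  fixes w :: "'i \<Rightarrow> 'a \<Rightarrow> 'b::comm_semiring_1"
  assumes "finite I" "j \<notin> I"
  shows "(\<Sum>t\<in>PiE (insert j I) (\<lambda>_. V). F t * (\<Prod>k\<in>insert j I. w k (t k)))
       = (\<Sum>y\<in>V. w j y * (\<Sum>t\<in>PiE I (\<lambda>_. V). F (t(j := y)) * (\<Prod>k\<in>I. w k (t k))))"
proof -
  have prod_upd: "(\<Prod>k\<in>insert j I. w k ((t(j := y)) k)) = w j y * (\<Prod>k\<in>I. w k (t k))" for t y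
  proof -
    have "(\<Prod>k\<in>I. w k ((t(j := y)) k)) = (\<Prod>k\<in>I. w k (t k))"
      using assms(2) by (intro prod.cong) auto
    then show ?thesis using assms by simp
  qed
  have "(\<Sum>t\<in>PiE (insert j I) (\<lambda>_. V). F t * (\<Prod>k\<in>insert j I. w k (t k)))
      = (\<Sum>(y, t)\<in>V \<times> PiE I (\<lambda>_. V). F (t(j := y)) * (\<Prod>k\<in>insert j I. w k ((t(j := y)) k)))"
    unfolding PiE_insert_eq using inj_combinator[OF assms(2)]
    by (subst sum.reindex) (auto simp: case_prod_unfold)
  also have "\<dots> = (\<Sum>y\<in>V. w j y * (\<Sum>t\<in>PiE I (\<lambda>_. V). F (t(j := y)) * (\<Prod>k\<in>I. w k (t k))))"
    unfolding sum.cartesian_product[symmetric] prod_upd by (simp add: sum_distrib_left mult_ac)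
  finally show ?thesis .
qed

lemma integral_PiM_distr_pmf:
  fixes I :: "'i set" and P :: "'i \<Rightarrow> real pmf" and F :: "('i \<Rightarrow> real) \<Rightarrow> real"
  defines "M \<equiv> PiM I (\<lambda>j. distr (measure_pmf (P j)) borel (\<lambda>x. x))"
  assumes I: "finite I" and V: "finite V" and supp: "\<And>j. j \<in> I \<Longrightarrow> set_pmf (P j) \<subseteq> V"
    and F: "F \<in> borel_measurable (PiM I (\<lambda>_. borel))"
  shows "(\<integral>v. F v \<partial>M) = (\<Sum>t\<in>PiE I (\<lambda>_. V). F t * (\<Prod>j\<in>I. pmf (P j) (t j)))"
proof -
  interpret G: product_prob_space "\<lambda>j. distr (measure_pmf (P j)) borel (\<lambda>x. x)"
    by (intro product_prob_spaceI prob_space.prob_space_distr) (auto simp: measure_pmf.prob_space_axioms)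
  interpret M: prob_space M
    unfolding M_def by (rule prob_space_PiM) (rule G.M.prob_space_axioms)
  have singleton: "{t} = PiE I (\<lambda>j. {t j})" if "t \<in> PiE I (\<lambda>_. V)" for t
    using that by (simp add: PiE_singleton PiE_iff)
  have singleton_sets: "{t} \<in> sets M" if "t \<in> PiE I (\<lambda>_. V)" for t
    unfolding M_def singleton[OF that] using I by (intro sets_PiM_I_finite) auto
  have measure_singleton: "measure M {t} = (\<Prod>j\<in>I. pmf (P j) (t j))" if "t \<in> PiE I (\<lambda>_. V)" for t
  proof -
    have "emeasure M {t} = (\<Prod>j\<in>I. ennreal (pmf (P j) (t j)))"
      unfolding M_def singleton[OF that] using I
      by (simp add: G.emeasure_PiM emeasure_distr emeasure_pmf_single)
    then show ?thesis
      by (simp add: M.emeasure_eq_measure prod_ennreal prod_nonneg)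
  qed
  have AE_V: "AE v in M. v \<in> PiE I (\<lambda>_. V)"
  proof (rule M.AE_prob_1)
    have "emeasure M (PiE I (\<lambda>_. V)) = (\<Prod>j\<in>I. emeasure (measure_pmf (P j)) V)"
      unfolding M_def using I V by (simp add: G.emeasure_PiM emeasure_distr finite_imp_closed)
    also have "\<dots> = 1"
      using supp by (intro prod.neutral ballI) (simp add: measure_pmf.emeasure_eq_1_AE AE_measure_pmf_iff subset_iff)
    finally show "M.prob (PiE I (\<lambda>_. V)) = 1"
      by (simp add: M.emeasure_eq_measure)
  qed
  have "(\<integral>v. F v \<partial>M) = (\<integral>v. (\<Sum>t\<in>PiE I (\<lambda>_. V). F t * indicator {t} v) \<partial>M)"
  proof (rule integral_cong_AE)
    have "sets M = sets (PiM I (\<lambda>_. borel))"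
      unfolding M_def by (intro sets_PiM_cong) auto
    then show "F \<in> borel_measurable M"
      using F measurable_cong_sets by blast
    show "(\<lambda>v. \<Sum>t\<in>PiE I (\<lambda>_. V). F t * indicator {t} v) \<in> borel_measurable M"
      using singleton_sets by (intro borel_measurable_sum borel_measurable_times) auto
    have "F v = (\<Sum>t\<in>PiE I (\<lambda>_. V). F t * indicator {t} v)" if "v \<in> PiE I (\<lambda>_. V)" for v
    proof -
      have "(\<Sum>t\<in>PiE I (\<lambda>_. V). F t * indicator {t} v) = (\<Sum>t\<in>PiE I (\<lambda>_. V). if t = v then F t else 0)"
        by (rule sum.cong) (auto simp: indicator_def)
      then show ?thesis
        using that I V by (simp add: finite_PiE)
    qed
    then show "AE v in M. F v = (\<Sum>t\<in>PiE I (\<lambda>_. V). F t * indicator {t} v)"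
      using AE_V by (auto elim: AE_mp)
  qed
  also have "\<dots> = (\<Sum>t\<in>PiE I (\<lambda>_. V). \<integral>v. F t * indicator {t} v \<partial>M)"
    by (rule Bochner_Integration.integral_sum)
      (use singleton_sets in \<open>auto intro!: integrable_real_indicator simp: M.emeasure_eq_measure\<close>)
  also have "\<dots> = (\<Sum>t\<in>PiE I (\<lambda>_. V). F t * measure M {t})"
    using singleton_sets by (intro sum.cong refl) simp
  finally show ?thesis
    by (simp add: measure_singleton)
qed

section \<open>Counting the agents whose report satisfies a predicate\<close>

definition card_with :: "'i set \<Rightarrow> ('a \<Rightarrow> bool) \<Rightarrow> ('i \<Rightarrow> 'a) \<Rightarrow> nat" where
  "card_with I P v = card {j\<in>I. P (v j)}"

lemma card_with_insert_upd:
  assumes "finite I" "j \<notin> I"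
  shows "card_with (insert j I) P (v(j := y)) = of_bool (P y) + card_with I P v"
proof -
  have "{k\<in>insert j I. P ((v(j := y)) k)} = (if P y then {j} else {}) \<union> {k\<in>I. P (v k)}"
    using assms(2) by auto
  moreover have "card ((if P y then {j} else {}) \<union> {k\<in>I. P (v k)}) = of_bool (P y) + card {k\<in>I. P (v k)}"
    using assms by (subst card_Un_disjoint) auto
  ultimately show ?thesis
    unfolding card_with_def by simp
qed

lemma card_with_permute:
  assumes "\<pi> permutes I"
  shows "card_with I P (v \<circ> \<pi>) = card_with I P v"
proof -
  have "{j\<in>I. P ((v \<circ> \<pi>) j)} = \<pi> -` {j\<in>I. P (v j)}"
    using permutes_in_image[OF assms] by auto
  also have "card \<dots> = card {j\<in>I. P (v j)}"
    using permutes_inj[OF assms] permutes_surj[OF assms] by (intro card_vimage_inj) auto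
  finally show ?thesis
    unfolding card_with_def .
qed

lemma real_card_with:
  assumes "finite I"
  shows "real (card_with I P v) = (\<Sum>j\<in>I. of_bool (P (v j)))"
proof -
  have "{j\<in>I. P (v j)} = I \<inter> {j. P (v j)}" by blast
  with assms show ?thesis
    unfolding card_with_def by simp
qed

lemma measurable_card_with[measurable]:
  fixes I :: "nat set" and P :: "real \<Rightarrow> bool"
  assumes [measurable]: "Measurable.pred borel P"
  shows "card_with I P \<in> measurable (PiM I (\<lambda>_. borel)) (count_space UNIV)"
  unfolding card_with_def[abs_def]
proof (rule measurable_card)
  fix i
  show "{v \<in> space (PiM I (\<lambda>_. borel)). i \<in> {j\<in>I. P (v j)}} \<in> sets (PiM I (\<lambda>_. borel))"
    by (cases "i \<in> I") simp_all
qed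

locale counterexample =
  fixes n :: nat
  assumes three_le_n: "3 \<le> n"
begin

definition u :: real where "u = 1 / (real n - 1)"

definition A :: real where "A = 2 * real n - 5/2"

definition V :: "real set" where "V = {A, -1, -2}"

definition pL :: real where "pL = u / 3"
definition rL :: real where "rL = u / 100"
definition gL :: real where "gL = 1 - 103 * u / 300"
definition qL :: real where "qL = 1 - u / 3"

definition aH :: real where "aH = (1 - u/100 + 197 * u^2 / (30000 * gL)) / 3"
definition bH :: real where "bH = 2 * aH - 197 * u^2 / (30000 * gL)"
definition cH :: real where "cH = u / 100"

text \<open>phi and kappa solve the two indifference conditions
  agent0_indifference_identity and low_agent_indifference_identity below.\<close>

definition phi :: real where "phi = 1 - 203 * (1 - u) / (300 * gL)"
definition kappa :: real where "kappa = 2 * (1 - u) / (9 * gL^2)"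

lemma u_pos: "0 < u" and u_le_half: "u \<le> 1/2"
proof -
  have "real n \<ge> 3" using three_le_n by simp
  then show "0 < u" "u \<le> 1/2" by (auto simp: u_def field_simps)
qed

lemma real_n_eq: "real n = 1 + 1/u"
  using three_le_n by (simp add: u_def field_simps)

lemma A_gt_0: "0 < A" and A_neq: "A \<noteq> -1" "A \<noteq> -2"
  using three_le_n by (auto simp: A_def)

lemma sum_V: "(\<Sum>y\<in>V. h y) = h A + h (-1) + h (-2)"
  using A_neq by (simp add: V_def add.assoc)

lemma gL_pos: "0 < gL" and qL_pos: "0 < qL" and pL_pos: "0 < pL" and rL_pos: "0 < rL"
  using u_pos u_le_half by (auto simp: gL_def qL_def pL_def rL_def)

lemma low_sum: "pL + rL + gL = 1" and qL_eq: "qL = rL + gL"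
  by (simp_all add: pL_def rL_def gL_def qL_def)

lemma aH_gL: "aH * gL = ((1 - u/100) * gL + 197 * u^2 / 30000) / 3"
  using gL_pos unfolding aH_def by (simp add: field_simps)

lemma bH_gL: "bH * gL = ((2 - u/50) * gL - 197 * u^2 / 30000) / 3"
  using gL_pos unfolding bH_def aH_def by (simp add: field_simps)

lemma phi_gL: "(phi - 1) * gL = - 203 * (1 - u) / 300"
  using gL_pos unfolding phi_def by (simp add: field_simps)

lemma phi_gL': "phi * gL = gL - 203 * (1 - u) / 300"
proof -
  have "(phi - 1) * gL = phi * gL - gL" by (simp add: algebra_simps)
  with phi_gL show ?thesis by linarith
qed

lemma kappa_gL: "kappa * gL^2 = 2 * (1 - u) / 9"
  using gL_pos unfolding kappa_def by (simp add: field_simps)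

lemma aH_pos: "0 < aH" and bH_pos: "0 < bH" and cH_pos: "0 < cH"
proof -
  have "u^2 \<le> 1/4"
    using u_pos u_le_half power_mono[of u "1/2" 2] by (simp add: power_divide)
  moreover have "(199/100) * (497/600) \<le> (2 - u/50) * gL"
    using u_le_half by (intro mult_mono) (simp_all add: gL_def)
  ultimately have "0 < (2 - u/50) * gL - 197 * u^2 / 30000"
    by linarith
  then have "0 < bH * gL"
    unfolding bH_gL by simp
  moreover have "0 < aH * gL"
    unfolding aH_gL using u_le_half gL_pos by (intro divide_pos_pos add_pos_nonneg) auto
  ultimately show "0 < aH" "0 < bH"
    using gL_pos by (simp_all add: zero_less_mult_iff)
  show "0 < cH" using u_pos by (simp add: cH_def)
qed

lemma high_sum: "aH + bH + cH = 1"
  by (simp add: aH_def bH_def cH_def field_simps)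

lemma kappa_nonneg: "0 \<le> kappa"
  using u_le_half by (simp add: kappa_def)

lemma phi_le_1: "phi \<le> 1"
proof -
  have "(phi - 1) * gL \<le> 0"
    using phi_gL u_le_half by simp
  then show ?thesis
    using gL_pos by (simp add: mult_le_0_iff)
qed

lemma kappa_le_phi: "kappa \<le> phi"
proof -
  have "kappa * gL^2 \<le> 2/9"
    using u_pos by (simp add: kappa_gL)
  also have "\<dots> \<le> gL * (gL - 203 * (1 - u) / 300)"
  proof -
    have "gL \<ge> 497/600" "gL - 203 * (1 - u) / 300 \<ge> 97/300"
      using u_pos u_le_half by (simp_all add: gL_def field_simps)
    then have "(497/600) * (97/300) \<le> gL * (gL - 203 * (1 - u) / 300)"
      by (intro mult_mono) auto
    then show ?thesis by simp
  qed
  also have "\<dots> = phi * gL^2"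
    unfolding phi_gL'[symmetric] by (simp add: power2_eq_square mult_ac)
  finally show ?thesis
    using gL_pos by simp
qed

lemma u_cube_le: "u^3 \<le> u^2 / 2"
proof -
  have "u^3 = u * u^2" by (simp add: power3_eq_cube power2_eq_square)
  also have "\<dots> \<le> (1/2) * u^2" by (rule mult_right_mono[OF u_le_half]) simp
  finally show ?thesis by simp
qed

lemma agent0_indifference_identity:
  "kappa + (phi - 1) * (real n - 1) * pL / gL + (real n - 1) * (real n - 2) * pL * rL / gL^2 = 0"
proof -
  have "gL^2 * (kappa + (phi - 1) * (real n - 1) * pL / gL + (real n - 1) * (real n - 2) * pL * rL / gL^2)
      = kappa * gL^2 + (phi - 1) * gL * (real n - 1) * pL + (real n - 1) * (real n - 2) * pL * rL"
    using gL_pos by (simp add: field_simps power2_eq_square)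
  also have "\<dots> = 0"
    unfolding kappa_gL phi_gL real_n_eq pL_def rL_def using u_pos by (simp add: field_simps)
  finally show ?thesis
    using gL_pos by simp
qed

lemma low_agent_indifference_identity:
  "aH * (phi - 1 + (real n - 2) * rL / gL) + bH * ((real n - 2) * pL / gL)
   + cH * (kappa + (phi - 1) * (real n - 2) * pL / gL + (real n - 2) * (real n - 3) * pL * rL / gL^2) = 0"
proof -
  have "gL^2 * (aH * (phi - 1 + (real n - 2) * rL / gL) + bH * ((real n - 2) * pL / gL)
   + cH * (kappa + (phi - 1) * (real n - 2) * pL / gL + (real n - 2) * (real n - 3) * pL * rL / gL^2))
    = aH * gL * ((phi - 1) * gL + (real n - 2) * rL) + bH * gL * (real n - 2) * pL
      + cH * (kappa * gL^2 + (phi - 1) * gL * (real n - 2) * pL + (real n - 2) * (real n - 3) * pL * rL)"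
    using gL_pos by (simp add: field_simps power2_eq_square)
  also have "\<dots> = 0"
    unfolding aH_gL bH_gL kappa_gL phi_gL real_n_eq pL_def rL_def cH_def using u_pos
    by (simp add: field_simps power2_eq_square)
  finally show ?thesis
    using gL_pos by simp
qed

lemma gain_bracket_pos:
  "0 < aH * (- phi / 2 + (real n - 1) * rL / (2 * gL)) + bH * ((real n - 1) * pL / (2 * gL))
     + cH * (- 2 * real n * kappa - phi * (real n - 1) * pL / (2 * gL)
             + (real n - 1) * (real n - 2) * pL * rL / (2 * gL^2))"
proof -
  have "gL^2 * (aH * (- phi / 2 + (real n - 1) * rL / (2 * gL)) + bH * ((real n - 1) * pL / (2 * gL))
     + cH * (- 2 * real n * kappa - phi * (real n - 1) * pL / (2 * gL)
             + (real n - 1) * (real n - 2) * pL * rL / (2 * gL^2)))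
   = aH * gL * ((real n - 1) * rL - phi * gL) / 2 + bH * gL * (real n - 1) * pL / 2
     + cH * ((real n - 1) * (real n - 2) * pL * rL / 2 - phi * gL * (real n - 1) * pL / 2
             - 2 * real n * (kappa * gL^2))"
    using gL_pos by (simp add: field_simps power2_eq_square)
  also have "\<dots> = 49/900 - 20759/270000 * u + 6209/270000 * u^2 - u^3/1800"
    unfolding aH_gL bH_gL kappa_gL phi_gL' real_n_eq pL_def rL_def cH_def using u_pos
    by (simp add: gL_def field_simps power2_eq_square power3_eq_cube)
  also have "\<dots> > 0"
    using u_pos u_le_half u_cube_le zero_le_power2[of u] by linarith
  finally show ?thesis
    using gL_pos by (simp add: zero_less_mult_iff)
qed

lemma pivot_bracket_nonpos:
  "aH * ((real n - 1) * rL / qL - 1/2)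
     + bH * ((real n - 1) * (real n - 2) * pL * rL / qL^2 + (real n - 1) * pL / (2 * qL))
     + cH * ((real n - 1) * (real n - 2) * pL * rL / qL^2 - (real n - 1) * pL / (2 * qL)) \<le> 0"
proof -
  have "gL * qL^2 * (aH * ((real n - 1) * rL / qL - 1/2)
     + bH * ((real n - 1) * (real n - 2) * pL * rL / qL^2 + (real n - 1) * pL / (2 * qL))
     + cH * ((real n - 1) * (real n - 2) * pL * rL / qL^2 - (real n - 1) * pL / (2 * qL)))
   = aH * gL * ((real n - 1) * rL * qL - qL^2 / 2)
     + bH * gL * ((real n - 1) * (real n - 2) * pL * rL + (real n - 1) * pL * qL / 2)
     + cH * gL * ((real n - 1) * (real n - 2) * pL * rL - (real n - 1) * pL * qL / 2)"
    using qL_pos by (simp add: field_simps power2_eq_square)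
  also have "\<dots> = -1/20 + 23429/270000 * u - 17839/405000 * u^2 + 6041/810000 * u^3 - u^4/5400"
    unfolding aH_gL bH_gL real_n_eq pL_def rL_def cH_def qL_def using u_pos
    by (simp add: gL_def field_simps power2_eq_square power3_eq_cube power4_eq_xxxx)
  also have "\<dots> \<le> 0"
    using u_pos u_le_half u_cube_le zero_le_power2[of u] zero_le_power[OF less_imp_le[OF u_pos], of 4] by linarith
  finally show ?thesis
    using gL_pos qL_pos by (simp add: mult_le_0_iff)
qed

definition three_point_pmf :: "real \<Rightarrow> real \<Rightarrow> real \<Rightarrow> real pmf" where
  "three_point_pmf a b c = pmf_of_list [(A, a), (-1, b), (-2, c)]"

lemma three_point_pmf:
  assumes "0 < a" "0 < b" "0 < c" "a + b + c = 1"
  shows "set_pmf (three_point_pmf a b c) = V"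
    and "pmf (three_point_pmf a b c) A = a" "pmf (three_point_pmf a b c) (-1) = b"
      "pmf (three_point_pmf a b c) (-2) = c"
    and "measure_pmf.prob (three_point_pmf a b c) {..0} = b + c"
proof -
  have wf: "pmf_of_list_wf [(A, a), (-1, b), (-2, c)]"
    using assms by (auto simp: pmf_of_list_wf_def add.assoc)
  show set_eq: "set_pmf (three_point_pmf a b c) = V"
    unfolding three_point_pmf_def V_def using assms by (subst set_pmf_of_list_eq[OF wf]) auto
  show "pmf (three_point_pmf a b c) A = a" "pmf (three_point_pmf a b c) (-1) = b"
    "pmf (three_point_pmf a b c) (-2) = c"
    unfolding three_point_pmf_def using A_neq by (simp_all add: pmf_pmf_of_list[OF wf])
  have "measure_pmf.prob (three_point_pmf a b c) {..0} = measure_pmf.prob (three_point_pmf a b c) {-1, -2}"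
    using A_gt_0 by (subst measure_Int_set_pmf[symmetric]) (auto simp: set_eq V_def intro: arg_cong2[where f=measure])
  also have "\<dots> = b + c"
    unfolding three_point_pmf_def by (simp add: measure_measure_pmf_finite pmf_pmf_of_list[OF wf] A_neq)
  finally show "measure_pmf.prob (three_point_pmf a b c) {..0} = b + c" .
qed

definition type_pmf :: "nat \<Rightarrow> real pmf" where
  "type_pmf i = (if i = 0 then three_point_pmf aH bH cH else three_point_pmf pL rL gL)"

definition G :: "nat \<Rightarrow> real measure" where
  "G i = distr (measure_pmf (type_pmf i)) borel (\<lambda>x. x)"

lemma set_type_pmf: "set_pmf (type_pmf i) = V"
  using three_point_pmf aH_pos bH_pos cH_pos high_sum pL_pos rL_pos gL_pos low_sum
  by (simp add: type_pmf_def)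

lemma pmf_type_pmf_0: "pmf (type_pmf 0) A = aH" "pmf (type_pmf 0) (-1) = bH" "pmf (type_pmf 0) (-2) = cH"
  using three_point_pmf aH_pos bH_pos cH_pos high_sum by (simp_all add: type_pmf_def)

lemma pmf_type_pmf_low:
  assumes "j \<noteq> 0"
  shows "pmf (type_pmf j) A = pL" "pmf (type_pmf j) (-1) = rL" "pmf (type_pmf j) (-2) = gL"
  using assms three_point_pmf pL_pos rL_pos gL_pos low_sum by (simp_all add: type_pmf_def)

lemma standing_assms_G: "standing_assms n G V"
  unfolding standing_assms_def
proof (intro conjI allI impI)
  fix i
  show "prob_space (G i)"
    unfolding G_def by (rule prob_space.prob_space_distr) (auto simp: measure_pmf.prob_space_axioms)
  show "sets (G i) = sets borel"
    by (simp add: G_def)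
  show "support_of (G i) = V"
    unfolding G_def by (simp add: support_of_distr_pmf set_type_pmf V_def)
  show "integrable (G i) (\<lambda>x. x)"
    unfolding G_def by (rule integrable_distr_pmf) (simp add: set_type_pmf V_def)
  have "1 - measure (G i) {..0} = pmf (type_pmf i) A"
    using three_point_pmf aH_pos bH_pos cH_pos high_sum pL_pos rL_pos gL_pos low_sum
    by (simp add: G_def measure_distr type_pmf_def)
  then show "0 < 1 - measure (G i) {..0}" "1 - measure (G i) {..0} < 1"
    using three_point_pmf aH_pos bH_pos cH_pos high_sum pL_pos rL_pos gL_pos low_sum
    by (auto simp: type_pmf_def)
next
  show "0 \<notin> V"
    using A_gt_0 by (auto simp: V_def)
qed

section \<open>Expectations over type profiles\<close>

definition expect :: "nat set \<Rightarrow> ((nat \<Rightarrow> real) \<Rightarrow> real) \<Rightarrow> real" where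
  "expect I F = (\<Sum>t\<in>PiE I (\<lambda>_. V). F t * (\<Prod>j\<in>I. pmf (type_pmf j) (t j)))"

lemma integral_eq_expect:
  assumes "finite I" "F \<in> borel_measurable (PiM I (\<lambda>_. borel))"
  shows "(\<integral>v. F v \<partial>PiM I G) = expect I F"
  unfolding G_def expect_def
  using assms by (intro integral_PiM_distr_pmf) (auto simp: set_type_pmf V_def)

lemma expect_insert:
  assumes "finite I" "j \<notin> I"
  shows "expect (insert j I) F = (\<Sum>y\<in>V. pmf (type_pmf j) y * expect I (\<lambda>t. F (t(j := y))))"
  unfolding expect_def using assms by (rule sum_PiE_insert_prod)

lemma expect_diff: "expect I (\<lambda>t. F t - H t) = expect I F - expect I H"
  unfolding expect_def by (simp add: left_diff_distrib sum_subtractf)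

lemma expect_mono:
  assumes "\<And>t. t \<in> PiE I (\<lambda>_. V) \<Longrightarrow> F t \<le> H t"
  shows "expect I F \<le> expect I H"
  unfolding expect_def using assms
  by (intro sum_mono mult_right_mono prod_nonneg) auto

definition expect_counts :: "nat set \<Rightarrow> (nat \<Rightarrow> nat \<Rightarrow> real) \<Rightarrow> real" where
  "expect_counts I F = expect I (\<lambda>t. F (card_with I (\<lambda>y. 0 < y) t) (card_with I (\<lambda>y. y = -1) t))"

lemma expect_counts_empty: "expect_counts {} F = F 0 0"
  by (simp add: expect_counts_def expect_def card_with_def)

lemma expect_counts_insert:
  assumes "finite I" "j \<notin> I"
  shows "expect_counts (insert j I) F
    = pmf (type_pmf j) A * expect_counts I (\<lambda>c d. F (Suc c) d)
      + pmf (type_pmf j) (-1) * expect_counts I (\<lambda>c d. F c (Suc d))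
      + pmf (type_pmf j) (-2) * expect_counts I F"
  unfolding expect_counts_def
  using A_gt_0 A_neq by (simp add: expect_insert[OF assms] sum_V card_with_insert_upd[OF assms])

lemma expect_counts_insert_low:
  assumes "finite I" "j \<notin> I" "j \<noteq> 0"
  shows "expect_counts (insert j I) F = pL * expect_counts I (\<lambda>c d. F (Suc c) d)
      + rL * expect_counts I (\<lambda>c d. F c (Suc d)) + gL * expect_counts I F"
  using assms by (simp add: expect_counts_insert pmf_type_pmf_low)

lemma expect_counts_insert_0:
  assumes "finite I" "0 \<notin> I"
  shows "expect_counts (insert 0 I) F = aH * expect_counts I (\<lambda>c d. F (Suc c) d)
      + bH * expect_counts I (\<lambda>c d. F c (Suc d)) + cH * expect_counts I F"
  using assms by (simp add: expect_counts_insert pmf_type_pmf_0)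

lemma expect_counts_add:
  "expect_counts I (\<lambda>c d. F c d + H c d) = expect_counts I F + expect_counts I H"
  by (simp add: expect_counts_def expect_def distrib_right sum.distrib)

lemma expect_counts_cmult: "expect_counts I (\<lambda>c d. k * F c d) = k * expect_counts I F"
  by (simp add: expect_counts_def expect_def sum_distrib_left mult.assoc)

lemma expect_counts_diff:
  "expect_counts I (\<lambda>c d. F c d - H c d) = expect_counts I F - expect_counts I H"
  using expect_counts_add[of I F "\<lambda>c d. - H c d"] expect_counts_cmult[of I "-1" H] by simp

lemma expect_counts_zero [simp]: "expect_counts I (\<lambda>c d. 0) = 0"
  using expect_counts_cmult[of I 0] by simp

lemma expect_counts_mono:
  assumes "\<And>c d. F c d \<le> H c d"
  shows "expect_counts I F \<le> expect_counts I H"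
  unfolding expect_counts_def using assms by (intro expect_mono)

lemma expect_counts_low_00:
  assumes "finite J" "0 \<notin> J"
  shows "expect_counts J (\<lambda>c d. of_bool (c = 0 \<and> d = 0)) = gL ^ card J"
  using assms
proof (induction J rule: finite_induct)
  case (insert j J)
  then show ?case by (simp add: expect_counts_insert_low)
qed (simp add: expect_counts_empty)

lemma expect_counts_low_10:
  assumes "finite J" "0 \<notin> J"
  shows "expect_counts J (\<lambda>c d. of_bool (c = 1 \<and> d = 0)) = card J * pL * gL ^ card J / gL"
  using assms
proof (induction J rule: finite_induct)
  case (insert j J)
  then show ?case
    using gL_pos by (simp add: expect_counts_insert_low expect_counts_low_00 field_simps)
qed (simp add: expect_counts_empty)

lemma expect_counts_low_01:
  assumes "finite J" "0 \<notin> J"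
  shows "expect_counts J (\<lambda>c d. of_bool (c = 0 \<and> d = 1)) = card J * rL * gL ^ card J / gL"
  using assms
proof (induction J rule: finite_induct)
  case (insert j J)
  then show ?case
    using gL_pos by (simp add: expect_counts_insert_low expect_counts_low_00 field_simps)
qed (simp add: expect_counts_empty)

lemma expect_counts_low_11:
  assumes "finite J" "0 \<notin> J"
  shows "expect_counts J (\<lambda>c d. of_bool (c = 1 \<and> d = 1))
    = card J * (real (card J) - 1) * pL * rL * gL ^ card J / gL^2"
  using assms
proof (induction J rule: finite_induct)
  case (insert j J)
  then have J: "finite J" "0 \<notin> J" "j \<notin> J" "j \<noteq> 0" by auto
  have "expect_counts (insert j J) (\<lambda>c d. of_bool (c = 1 \<and> d = 1))
    = pL * expect_counts J (\<lambda>c d. of_bool (c = 0 \<and> d = 1))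
      + rL * expect_counts J (\<lambda>c d. of_bool (c = 1 \<and> d = 0))
      + gL * expect_counts J (\<lambda>c d. of_bool (c = 1 \<and> d = 1))"
    using J by (simp add: expect_counts_insert_low)
  also have "\<dots> = card (insert j J) * (real (card (insert j J)) - 1) * pL * rL * gL ^ card (insert j J) / gL^2"
    unfolding expect_counts_low_10[OF J(1,2)] expect_counts_low_01[OF J(1,2)] insert.IH[OF J(2)]
    using J gL_pos by (simp add: field_simps power2_eq_square)
  finally show ?case .
qed (simp add: expect_counts_empty)

lemma expect_counts_low_small_support:
  assumes J: "finite J" "0 \<notin> J" and F: "\<And>c d. 1 < c \<or> 1 < d \<Longrightarrow> F c d = 0"
  shows "expect_counts J F = gL ^ card J * (F 0 0 + F 1 0 * card J * pL / gL + F 0 1 * card J * rL / gL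
    + F 1 1 * card J * (real (card J) - 1) * pL * rL / gL^2)"
proof -
  have F_eq: "F = (\<lambda>c d. F 0 0 * of_bool (c = 0 \<and> d = 0) + F 1 0 * of_bool (c = 1 \<and> d = 0)
              + F 0 1 * of_bool (c = 0 \<and> d = 1) + F 1 1 * of_bool (c = 1 \<and> d = 1))"
  proof (intro ext)
    fix c d
    show "F c d = F 0 0 * of_bool (c = 0 \<and> d = 0) + F 1 0 * of_bool (c = 1 \<and> d = 0)
              + F 0 1 * of_bool (c = 0 \<and> d = 1) + F 1 1 * of_bool (c = 1 \<and> d = 1)"
    proof (cases "1 < c \<or> 1 < d")
      case False
      then have "c \<in> {0, 1}" "d \<in> {0, 1}" by auto
      then show ?thesis by auto
    qed (use F in auto)
  qed
  have "expect_counts J F = F 0 0 * expect_counts J (\<lambda>c d. of_bool (c = 0 \<and> d = 0))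
      + F 1 0 * expect_counts J (\<lambda>c d. of_bool (c = 1 \<and> d = 0))
      + F 0 1 * expect_counts J (\<lambda>c d. of_bool (c = 0 \<and> d = 1))
      + F 1 1 * expect_counts J (\<lambda>c d. of_bool (c = 1 \<and> d = 1))"
    by (subst F_eq) (simp only: expect_counts_add expect_counts_cmult)
  also have "\<dots> = gL ^ card J * (F 0 0 + F 1 0 * card J * pL / gL + F 0 1 * card J * rL / gL
    + F 1 1 * card J * (real (card J) - 1) * pL * rL / gL^2)"
    unfolding expect_counts_low_00[OF J] expect_counts_low_10[OF J] expect_counts_low_01[OF J]
      expect_counts_low_11[OF J]
    by (simp add: algebra_simps)
  finally show ?thesis .
qed

lemma expect_counts_insert_0_small_support:
  assumes J: "finite J" "0 \<notin> J" and F: "\<And>c d. 1 < c \<or> 1 < d \<Longrightarrow> F c d = 0"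
  shows "expect_counts (insert 0 J) F = gL ^ card J *
    (aH * (F 1 0 + F 1 1 * card J * rL / gL) + bH * (F 0 1 + F 1 1 * card J * pL / gL)
     + cH * (F 0 0 + F 1 0 * card J * pL / gL + F 0 1 * card J * rL / gL
             + F 1 1 * card J * (real (card J) - 1) * pL * rL / gL^2))"
proof -
  have "\<And>c d. 1 < c \<or> 1 < d \<Longrightarrow> F (Suc c) d = 0" "\<And>c d. 1 < c \<or> 1 < d \<Longrightarrow> F c (Suc d) = 0"
    using F by auto
  from this[THEN expect_counts_low_small_support[OF J]]
  have shift_c: "expect_counts J (\<lambda>c d. F (Suc c) d) = gL ^ card J * (F 1 0 + F 1 1 * card J * rL / gL)"
    and shift_d: "expect_counts J (\<lambda>c d. F c (Suc d)) = gL ^ card J * (F 0 1 + F 1 1 * card J * pL / gL)"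
    using F by simp_all
  have E: "expect_counts J F = gL ^ card J * (F 0 0 + F 1 0 * card J * pL / gL + F 0 1 * card J * rL / gL
    + F 1 1 * card J * (real (card J) - 1) * pL * rL / gL^2)"
    by (rule expect_counts_low_small_support[OF J F])
  show ?thesis
    unfolding expect_counts_insert_0[OF J] shift_c shift_d E by (simp only: distrib_left mult.left_commute)
qed

lemma expect_counts_low_no_pos:
  assumes "finite J" "0 \<notin> J"
  shows "expect_counts J (\<lambda>c d. of_bool (c = 0)) = qL ^ card J"
  using assms
proof (induction J rule: finite_induct)
  case (insert j J)
  then show ?case by (simp add: expect_counts_insert_low qL_eq algebra_simps)
qed (simp add: expect_counts_empty)

lemma expect_counts_low_one_pos:
  assumes "finite J" "0 \<notin> J"
  shows "expect_counts J (\<lambda>c d. of_bool (c = 1)) = card J * pL * qL ^ card J / qL"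
  using assms
proof (induction J rule: finite_induct)
  case (insert j J)
  then show ?case
    using qL_pos by (simp add: expect_counts_insert_low expect_counts_low_no_pos qL_eq field_simps)
qed (simp add: expect_counts_empty)

lemma expect_counts_low_no_pos_neg1:
  assumes "finite J" "0 \<notin> J"
  shows "expect_counts J (\<lambda>c d. of_bool (c = 0) * real d) = card J * rL * qL ^ card J / qL"
  using assms
proof (induction J rule: finite_induct)
  case (insert j J)
  then have J: "finite J" "0 \<notin> J" "j \<notin> J" "j \<noteq> 0" by auto
  have "expect_counts (insert j J) (\<lambda>c d. of_bool (c = 0) * real d)
    = rL * (expect_counts J (\<lambda>c d. of_bool (c = 0) * real d) + expect_counts J (\<lambda>c d. of_bool (c = 0)))
      + gL * expect_counts J (\<lambda>c d. of_bool (c = 0) * real d)"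
    using J by (simp add: expect_counts_insert_low expect_counts_add[symmetric] algebra_simps)
  also have "\<dots> = (rL + gL) * expect_counts J (\<lambda>c d. of_bool (c = 0) * real d) + rL * qL ^ card J"
    unfolding expect_counts_low_no_pos[OF J(1,2)] by (simp add: algebra_simps)
  also have "\<dots> = card (insert j J) * rL * qL ^ card (insert j J) / qL"
    unfolding qL_eq[symmetric] insert.IH[OF J(2)] using J qL_pos by (simp add: field_simps)
  finally show ?case .
qed (simp add: expect_counts_empty)

lemma expect_counts_low_one_pos_neg1:
  assumes "finite J" "0 \<notin> J"
  shows "expect_counts J (\<lambda>c d. of_bool (c = 1) * real d)
    = card J * (real (card J) - 1) * pL * rL * qL ^ card J / qL^2"
  using assms
proof (induction J rule: finite_induct)
  case (insert j J)
  then have J: "finite J" "0 \<notin> J" "j \<notin> J" "j \<noteq> 0" by auto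
  have "expect_counts (insert j J) (\<lambda>c d. of_bool (c = 1) * real d)
    = pL * expect_counts J (\<lambda>c d. of_bool (c = 0) * real d)
      + rL * (expect_counts J (\<lambda>c d. of_bool (c = 1) * real d) + expect_counts J (\<lambda>c d. of_bool (c = 1)))
      + gL * expect_counts J (\<lambda>c d. of_bool (c = 1) * real d)"
    using J by (simp add: expect_counts_insert_low expect_counts_add[symmetric] algebra_simps)
  also have "\<dots> = (rL + gL) * expect_counts J (\<lambda>c d. of_bool (c = 1) * real d)
      + pL * expect_counts J (\<lambda>c d. of_bool (c = 0) * real d) + rL * expect_counts J (\<lambda>c d. of_bool (c = 1))"
    by (simp add: algebra_simps)
  also have "\<dots> = card (insert j J) * (real (card (insert j J)) - 1) * pL * rL * qL ^ card (insert j J) / qL^2"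
    unfolding qL_eq[symmetric] expect_counts_low_no_pos_neg1[OF J(1,2)] expect_counts_low_one_pos[OF J(1,2)]
      insert.IH[OF J(2)]
    using J qL_pos by (simp add: field_simps power2_eq_square)
  finally show ?case .
qed (simp add: expect_counts_empty)

lemma expect_counts_low_at_most_one_pos:
  fixes \<alpha> \<beta> \<gamma> \<delta> :: real
  assumes J: "finite J" "0 \<notin> J"
  shows "expect_counts J (\<lambda>c d. of_bool (c = 0) * (\<alpha> + \<beta> * real d) + of_bool (c = 1) * (\<gamma> + \<delta> * real d))
    = qL ^ card J * (\<alpha> + \<beta> * card J * rL / qL + \<gamma> * card J * pL / qL
        + \<delta> * card J * (real (card J) - 1) * pL * rL / qL^2)"
proof -
  have fun_eq: "(\<lambda>c d. of_bool (c = 0) * (\<alpha> + \<beta> * real d) + of_bool (c = 1) * (\<gamma> + \<delta> * real d))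
    = (\<lambda>c d. \<alpha> * of_bool (c = 0) + \<beta> * (of_bool (c = 0) * real d)
        + \<gamma> * of_bool (c = 1) + \<delta> * (of_bool (c = 1) * real d))"
    by (simp add: fun_eq_iff algebra_simps)
  have "expect_counts J (\<lambda>c d. of_bool (c = 0) * (\<alpha> + \<beta> * real d) + of_bool (c = 1) * (\<gamma> + \<delta> * real d))
    = \<alpha> * expect_counts J (\<lambda>c d. of_bool (c = 0))
      + \<beta> * expect_counts J (\<lambda>c d. of_bool (c = 0) * real d)
      + \<gamma> * expect_counts J (\<lambda>c d. of_bool (c = 1))
      + \<delta> * expect_counts J (\<lambda>c d. of_bool (c = 1) * real d)"
    by (subst fun_eq) (simp only: expect_counts_add expect_counts_cmult)
  then show ?thesis
    unfolding expect_counts_low_no_pos[OF J] expect_counts_low_no_pos_neg1[OF J]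
      expect_counts_low_one_pos[OF J] expect_counts_low_one_pos_neg1[OF J]
    by (simp add: algebra_simps)
qed

section \<open>The social choice function\<close>

definition scf_counts :: "nat \<Rightarrow> nat \<Rightarrow> real" where
  "scf_counts c d = (if 2 \<le> c then 1
                     else if c = 1 then (if d = 0 then phi else if d = 1 then 1 else 0)
                     else if d = 0 then kappa else 0)"

abbreviation npos :: "(nat \<Rightarrow> real) \<Rightarrow> nat" where
  "npos \<equiv> card_with {..<n} (\<lambda>y. 0 < y)"

abbreviation nneg1 :: "(nat \<Rightarrow> real) \<Rightarrow> nat" where
  "nneg1 \<equiv> card_with {..<n} (\<lambda>y. y = -1)"

definition scf :: "(nat \<Rightarrow> real) \<Rightarrow> real" where
  "scf v = scf_counts (npos v) (nneg1 v)"

lemma scf_counts_range: "0 \<le> scf_counts c d" "scf_counts c d \<le> 1"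
  using phi_le_1 kappa_nonneg kappa_le_phi by (auto simp: scf_counts_def)

lemma scf_counts_mono: "scf_counts c d \<le> scf_counts (Suc c) d"
  using phi_le_1 kappa_nonneg kappa_le_phi by (auto simp: scf_counts_def)

lemma SCF_scf: "SCF n V scf"
proof -
  have "scf \<in> borel_measurable (PiM {..<n} (\<lambda>_. borel))"
    unfolding scf_def[abs_def] by measurable
  then show ?thesis
    unfolding SCF_def scf_def using scf_counts_range by simp
qed

lemma anonymous_scf: "anonymous n V scf"
  unfolding anonymous_def scf_def by (simp add: card_with_permute)

lemma interim_scf:
  assumes "i < n"
  shows "interim n G scf i x
    = expect_counts ({..<n} - {i}) (\<lambda>c d. scf_counts (of_bool (0 < x) + c) (of_bool (x = -1) + d))"
proof -
  let ?I = "{..<n} - {i}"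
  have I: "finite ?I" "i \<notin> ?I" by auto
  have ins: "{..<n} = insert i ?I" using assms by auto
  have "interim n G scf i x = (\<integral>w. scf_counts (of_bool (0 < x) + card_with ?I (\<lambda>y. 0 < y) w)
      (of_bool (x = -1) + card_with ?I (\<lambda>y. y = -1) w) \<partial>PiM ?I G)"
    unfolding interim_def scf_def by (simp only: card_with_insert_upd[OF I, folded ins])
  also have "\<dots> = expect_counts ?I (\<lambda>c d. scf_counts (of_bool (0 < x) + c) (of_bool (x = -1) + d))"
    unfolding expect_counts_def by (rule integral_eq_expect) (use I in measurable)
  finally show ?thesis .
qed

lemma expect_counts_scf_counts_indifference:
  assumes "i < n"
  shows "expect_counts ({..<n} - {i}) (\<lambda>c d. scf_counts c d - scf_counts c (Suc d)) = 0"
proof -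
  let ?D = "\<lambda>c d. scf_counts c d - scf_counts c (Suc d)"
  have small: "\<And>c d. 1 < c \<or> 1 < d \<Longrightarrow> ?D c d = 0"
    by (auto simp: scf_counts_def)
  show ?thesis
  proof (cases "i = 0")
    case True
    have J: "finite {1..<n}" "0 \<notin> {1..<n}" by auto
    have "{..<n} - {i} = {1..<n}"
      using True by auto
    moreover have "real (card {1..<n}) = real n - 1"
      using three_le_n by simp
    ultimately have "expect_counts ({..<n} - {i}) ?D = gL ^ card {1..<n} *
      (kappa + (phi - 1) * (real n - 1) * pL / gL + (real n - 1) * (real n - 2) * pL * rL / gL^2)"
      using expect_counts_low_small_support[where F = ?D, OF J small] by (simp add: scf_counts_def)
    also have "\<dots> = 0"
      by (simp only: agent0_indifference_identity mult_zero_right)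
    finally show ?thesis .
  next
    case False
    let ?J = "{1..<n} - {i}"
    have J: "finite ?J" "0 \<notin> ?J" by auto
    have "{..<n} - {i} = insert 0 ?J" using False three_le_n by auto
    moreover have "real (card ?J) = real n - 2"
      using False assms three_le_n by (simp add: of_nat_diff)
    ultimately have "expect_counts ({..<n} - {i}) ?D = gL ^ card ?J *
      (aH * (phi - 1 + (real n - 2) * rL / gL) + bH * ((real n - 2) * pL / gL)
       + cH * (kappa + (phi - 1) * (real n - 2) * pL / gL + (real n - 2) * (real n - 3) * pL * rL / gL^2))"
      using expect_counts_insert_0_small_support[where F = ?D, OF J small] by (simp add: scf_counts_def)
    also have "\<dots> = 0"
      by (simp only: low_agent_indifference_identity mult_zero_right)
    finally show ?thesis .
  qed
qed

lemma BIC_scf: "BIC n G V scf"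
  unfolding BIC_def
proof (intro allI impI ballI)
  fix i x x' assume i: "i < n" and x: "x \<in> V" and x': "x' \<in> V"
  let ?I = "{..<n} - {i}"
  have interim_A: "interim n G scf i A = expect_counts ?I (\<lambda>c d. scf_counts (Suc c) d)"
    and interim_neg1: "interim n G scf i (-1) = expect_counts ?I (\<lambda>c d. scf_counts c (Suc d))"
    and interim_neg2: "interim n G scf i (-2) = expect_counts ?I scf_counts"
    using interim_scf[OF i] A_gt_0 by simp_all
  have "interim n G scf i (-2) - interim n G scf i (-1) = 0"
    unfolding interim_neg1 interim_neg2 expect_counts_diff[symmetric]
    by (rule expect_counts_scf_counts_indifference[OF i])
  moreover have "interim n G scf i (-2) \<le> interim n G scf i A"
    unfolding interim_A interim_neg2 by (rule expect_counts_mono) (rule scf_counts_mono)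
  ultimately show "x * interim n G scf i x' \<le> x * interim n G scf i x"
    using x x' A_gt_0 by (auto simp: V_def intro: mult_left_mono)
qed

section \<open>Welfare comparison with ordinal SCFs\<close>

definition total :: "nat \<Rightarrow> nat \<Rightarrow> real" where
  "total c d = (A + 2) * c + d - 2 * real n"

definition welfare_bound :: "nat \<Rightarrow> nat \<Rightarrow> real" where
  "welfare_bound c d = (if c \<le> 1 then scf_counts c d * total c d else 0)"

definition pivot_total :: "nat \<Rightarrow> nat \<Rightarrow> real" where
  "pivot_total c d = (if c = 1 then total c d else 0)"

lemma sum_eq_total:
  assumes "t \<in> PiE {..<n} (\<lambda>_. V)"
  shows "(\<Sum>i<n. t i) = total (npos t) (nneg1 t)"
proof -
  have "t i = (A + 2) * of_bool (0 < t i) + of_bool (t i = -1) - 2" if "i < n" for i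
  proof -
    have "t i \<in> V" using assms that by (auto simp: PiE_iff)
    then show ?thesis using A_gt_0 by (auto simp: V_def)
  qed
  then have "(\<Sum>i<n. t i) = (\<Sum>i<n. (A + 2) * of_bool (0 < t i) + of_bool (t i = -1) - 2)"
    by (intro sum.cong) auto
  then show ?thesis
    by (simp add: total_def real_card_with sum.distrib sum_subtractf sum_distrib_left)
qed

lemma card_with_le: "finite I \<Longrightarrow> card_with I P v \<le> card I"
  unfolding card_with_def by (rule card_mono) auto

lemma welfare_density_lower_bound:
  assumes t: "t \<in> PiE {..<n} (\<lambda>_. V)" and y: "0 \<le> y" "y \<le> 1" and one_pos: "npos t = 1 \<Longrightarrow> y = h"
  shows "welfare_bound (npos t) (nneg1 t) - h * pivot_total (npos t) (nneg1 t) \<le> (scf t - y) * (\<Sum>i<n. t i)"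
proof -
  define c d where "c = npos t" and "d = nneg1 t"
  have "d \<le> n"
    unfolding d_def using card_with_le[of "{..<n}"] by simp
  have "welfare_bound c d - h * pivot_total c d \<le> (scf_counts c d - y) * total c d"
  proof (cases "2 \<le> c")
    case True
    have "(A + 2) * 2 \<le> (A + 2) * c"
      using True A_gt_0 by (intro mult_left_mono) auto
    then have "0 \<le> total c d"
      using three_le_n by (simp add: total_def A_def)
    with True y show ?thesis
      by (simp add: welfare_bound_def pivot_total_def scf_counts_def)
  next
    case False
    then consider "c = 0" | "c = 1" by linarith
    then show ?thesis
    proof cases
      case 1
      then have "y * total c d \<le> 0"
        using y \<open>d \<le> n\<close> by (simp add: total_def mult_nonneg_nonpos)
      with 1 show ?thesis
        by (simp add: welfare_bound_def pivot_total_def algebra_simps)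
    next
      case 2
      then show ?thesis
        using one_pos by (simp add: c_def welfare_bound_def pivot_total_def algebra_simps)
    qed
  qed
  then show ?thesis
    unfolding c_def d_def scf_def sum_eq_total[OF t] .
qed

lemma expect_counts_welfare_bound_pos: "0 < expect_counts {..<n} welfare_bound"
proof -
  have J: "finite {1..<n}" "0 \<notin> {1..<n}" by auto
  have small: "\<And>c d. 1 < c \<or> 1 < d \<Longrightarrow> welfare_bound c d = 0"
    by (auto simp: welfare_bound_def scf_counts_def)
  have "{..<n} = insert 0 {1..<n}"
    using three_le_n by auto
  moreover have "real (card {1..<n}) = real n - 1"
    using three_le_n by simp
  ultimately have "expect_counts {..<n} welfare_bound = gL ^ card {1..<n} *
      (aH * (- phi / 2 + (real n - 1) * rL / (2 * gL)) + bH * ((real n - 1) * pL / (2 * gL))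
       + cH * (- 2 * real n * kappa - phi * (real n - 1) * pL / (2 * gL)
               + (real n - 1) * (real n - 2) * pL * rL / (2 * gL^2)))"
    using expect_counts_insert_0_small_support[where F = welfare_bound, OF J small]
    by (simp add: welfare_bound_def scf_counts_def total_def A_def field_simps)
  also have "\<dots> > 0"
    using gain_bracket_pos gL_pos by simp
  finally show ?thesis .
qed

lemma expect_counts_pivot_total_nonpos: "expect_counts {..<n} pivot_total \<le> 0"
proof -
  have J: "finite {1..<n}" "0 \<notin> {1..<n}" by auto
  have k: "real (card {1..<n}) = real n - 1"
    using three_le_n by simp
  have shift_c_eq: "(\<lambda>c d. pivot_total (Suc c) d)
      = (\<lambda>c d. of_bool (c = 0) * (- 1/2 + 1 * real d) + of_bool (c = 1) * (0 + 0 * real d))"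
    by (auto simp: fun_eq_iff pivot_total_def total_def A_def)
  have shift_c: "expect_counts {1..<n} (\<lambda>c d. pivot_total (Suc c) d)
      = qL ^ card {1..<n} * ((real n - 1) * rL / qL - 1/2)"
    unfolding shift_c_eq expect_counts_low_at_most_one_pos[OF J] k by simp
  have shift_d_eq: "(\<lambda>c d. pivot_total c (Suc d))
      = (\<lambda>c d. of_bool (c = 0) * (0 + 0 * real d) + of_bool (c = 1) * (1/2 + 1 * real d))"
    by (auto simp: fun_eq_iff pivot_total_def total_def A_def)
  have shift_d: "expect_counts {1..<n} (\<lambda>c d. pivot_total c (Suc d))
      = qL ^ card {1..<n} * ((real n - 1) * (real n - 2) * pL * rL / qL^2 + (real n - 1) * pL / (2 * qL))"
    unfolding shift_d_eq expect_counts_low_at_most_one_pos[OF J] k by (simp add: algebra_simps)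
  have unshifted_eq: "pivot_total
      = (\<lambda>c d. of_bool (c = 0) * (0 + 0 * real d) + of_bool (c = 1) * (- 1/2 + 1 * real d))"
    by (auto simp: fun_eq_iff pivot_total_def total_def A_def)
  have unshifted: "expect_counts {1..<n} pivot_total
      = qL ^ card {1..<n} * ((real n - 1) * (real n - 2) * pL * rL / qL^2 - (real n - 1) * pL / (2 * qL))"
    unfolding unshifted_eq expect_counts_low_at_most_one_pos[OF J] k by (simp add: algebra_simps)
  have "{..<n} = insert 0 {1..<n}"
    using three_le_n by auto
  then have "expect_counts {..<n} pivot_total = aH * expect_counts {1..<n} (\<lambda>c d. pivot_total (Suc c) d)
      + bH * expect_counts {1..<n} (\<lambda>c d. pivot_total c (Suc d)) + cH * expect_counts {1..<n} pivot_total"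
    using expect_counts_insert_0[OF J] by simp
  also have "\<dots> = qL ^ card {1..<n} * (aH * ((real n - 1) * rL / qL - 1/2)
       + bH * ((real n - 1) * (real n - 2) * pL * rL / qL^2 + (real n - 1) * pL / (2 * qL))
       + cH * ((real n - 1) * (real n - 2) * pL * rL / qL^2 - (real n - 1) * pL / (2 * qL)))"
    unfolding shift_c shift_d unshifted by (simp only: distrib_left mult.left_commute)
  also have "\<dots> \<le> 0"
    using pivot_bracket_nonpos qL_pos by (simp add: mult_nonneg_nonpos)
  finally show ?thesis .
qed

lemma npos_eq_card_chi: "npos v = card (chi n v)"
  unfolding card_with_def chi_def by (simp add: lessThan_def)

lemma ordinal_anonymous_eq_one_pos:
  assumes ord: "ordinal n V g" and anon: "anonymous n V g"
    and t: "t \<in> PiE {..<n} (\<lambda>_. V)" "npos t = 1"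
    and t': "t' \<in> PiE {..<n} (\<lambda>_. V)" "npos t' = 1"
  shows "g t = g t'"
proof -
  obtain m m' where m: "chi n t = {m}" and m': "chi n t' = {m'}"
    using t(2) t'(2) by (auto simp: npos_eq_card_chi card_1_singleton_iff)
  then have "m < n" "m' < n"
    by (auto simp: chi_def)
  define \<pi> where "\<pi> = Transposition.transpose m m'"
  have \<pi>: "\<pi> permutes {..<n}"
    unfolding \<pi>_def using \<open>m < n\<close> \<open>m' < n\<close> by (intro permutes_swap_id) auto
  have "t \<circ> \<pi> \<in> PiE {..<n} (\<lambda>_. V)"
    using t(1) permutes_in_image[OF \<pi>] permutes_not_in[OF \<pi>] by (auto simp: PiE_iff extensional_def)
  moreover have "chi n (t \<circ> \<pi>) = chi n t'"
  proof -
    have "i \<in> chi n (t \<circ> \<pi>) \<longleftrightarrow> i = m'" for i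
    proof -
      have "i \<in> chi n (t \<circ> \<pi>) \<longleftrightarrow> \<pi> i \<in> chi n t"
        using permutes_in_image[OF \<pi>] by (auto simp: chi_def)
      also have "\<dots> \<longleftrightarrow> i = m'"
        unfolding m \<pi>_def by (auto simp: transpose_eq_iff)
      finally show ?thesis .
    qed
    then show ?thesis
      using m' by auto
  qed
  ultimately have "g (t \<circ> \<pi>) = g t'"
    using ord t'(1) unfolding ordinal_def by blast
  moreover have "g t = g (t \<circ> \<pi>)"
    using anon t(1) \<pi> unfolding anonymous_def by blast
  ultimately show ?thesis by simp
qed

lemma welfare_eq_expect:
  assumes "F \<in> borel_measurable (PiM {..<n} (\<lambda>_. borel))"
  shows "welfare n G F = expect {..<n} (\<lambda>v. F v * (\<Sum>i<n. v i))"
  unfolding welfare_def by (rule integral_eq_expect) (use assms in measurable)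

lemma welfare_scf_gt:
  assumes SCF: "SCF n V g" and ord: "ordinal n V g" and anon: "anonymous n V g"
  shows "welfare n G g < welfare n G scf"
proof -
  define t1 where "t1 = restrict (\<lambda>i. if i = 0 then A else -2) {..<n}"
  have t1: "t1 \<in> PiE {..<n} (\<lambda>_. V)" "npos t1 = 1"
  proof -
    show "t1 \<in> PiE {..<n} (\<lambda>_. V)" by (simp add: t1_def V_def)
    have "{j \<in> {..<n}. 0 < t1 j} = {0}"
      using three_le_n A_gt_0 by (auto simp: t1_def)
    then show "npos t1 = 1" by (simp add: card_with_def)
  qed
  define h where "h = g t1"
  have g_range: "0 \<le> g t" "g t \<le> 1" if "t \<in> PiE {..<n} (\<lambda>_. V)" for t
    using SCF that by (auto simp: SCF_def)
  have "expect_counts {..<n} (\<lambda>c d. welfare_bound c d - h * pivot_total c d)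
      \<le> expect {..<n} (\<lambda>t. (scf t - g t) * (\<Sum>i<n. t i))"
    unfolding expect_counts_def
  proof (rule expect_mono)
    fix t assume t: "t \<in> PiE {..<n} (\<lambda>_. V)"
    show "welfare_bound (npos t) (nneg1 t) - h * pivot_total (npos t) (nneg1 t)
      \<le> (scf t - g t) * (\<Sum>i<n. t i)"
      using ordinal_anonymous_eq_one_pos[OF ord anon t _ t1] unfolding h_def
      by (rule welfare_density_lower_bound[OF t g_range[OF t]])
  qed
  also have "\<dots> = welfare n G scf - welfare n G g"
  proof -
    have meas: "scf \<in> borel_measurable (PiM {..<n} (\<lambda>_. borel))"
      "g \<in> borel_measurable (PiM {..<n} (\<lambda>_. borel))"
      using SCF SCF_scf by (simp_all add: SCF_def)
    show ?thesis
      unfolding welfare_eq_expect[OF meas(1)] welfare_eq_expect[OF meas(2)] expect_diff[symmetric]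
      by (simp add: left_diff_distrib)
  qed
  finally have "expect_counts {..<n} welfare_bound - h * expect_counts {..<n} pivot_total
      \<le> welfare n G scf - welfare n G g"
    by (simp add: expect_counts_diff expect_counts_cmult)
  moreover have "h * expect_counts {..<n} pivot_total \<le> 0"
    unfolding h_def using g_range t1 expect_counts_pivot_total_nonpos by (simp add: mult_nonneg_nonpos)
  ultimately show ?thesis
    using expect_counts_welfare_bound_pos by linarith
qed

end

theorem theorem2:
  fixes n :: nat
  assumes "n \<ge> 3"
  shows "\<exists>G V. standing_assms n G V \<and>
           (\<exists>f. SCF n V f \<and> anonymous n V f \<and> BIC n G V f \<and>
                (\<forall>g. SCF n V g \<and> ordinal n V g \<and> anonymous n V g \<and> BIC n G V g
                     \<longrightarrow> welfare n G f > welfare n G g))"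
proof -
  interpret counterexample n
    using assms by unfold_locales
  show ?thesis
  proof (intro exI conjI allI impI)
    show "standing_assms n G V" "SCF n V scf" "anonymous n V scf" "BIC n G V scf"
      by (fact standing_assms_G SCF_scf anonymous_scf BIC_scf)+
    fix g assume "SCF n V g \<and> ordinal n V g \<and> anonymous n V g \<and> BIC n G V g"
    then show "welfare n G g < welfare n G scf"
      by (intro welfare_scf_gt) auto
  qed
qed

end
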